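(* For $1\le i\le n$ and $1\le j\le n-1$ we have $g_jt_i=t_{s_j(i)}g_j$. Consequently $g_jf=(s_j.f)g_j$ for every $f\in R[t_1,\ldots,t_n]$ and $1\le j\le n-1$.
   Context: Standing setup: $R$ is an integral domain, $n\ge 2$, $r\ge 1$, and $q,u_1,\ldots,u_r\in R$ with $q$ invertible in $R$ and $\Delta:=\prod_{1\le j<i\le r}(u_i-u_j)$ invertible in $R$. For $1\le c\le r$ let $F_c(X)\in R[X]$ be the unique polynomial of degree $\le r-1$ with $F_c(u_{c'})=\delta_{c,c'}\Delta$ for all $1\le c'\le r$. The modified Ariki–Koike (Shoji) algebra $\mathcal H_{n,r}=\mathcal H_{n,r}(R,q,u_1,\ldots,u_r)$ is the associative $R$-algebra generated by $t_1,\ldots,t_n,T_1,\ldots,T_{n-1}$ subject to: $(T_i-q)(T_i+q^{-1})=0$; $(t_i-u_1)\cdots(t_i-u_r)=0$; $T_iT_{i+1}T_i=T_{i+1}T_iT_{i+1}$; $T_iT_j=T_jT_i$ for $|i-j|\ge2$; $t_it_j=t_jt_i$; $T_jt_k=t_kT_j$ for $k\ne j,j+1$; and for $2\le j\le n$: $T_{j-1}t_j=t_{j-1}T_{j-1}+\Delta^{-2}\sum_{1\le c_1<c_2\le r}(u_{c_2}-u_{c_1})(q-q^{-1})F_{c_1}(t_{j-1})F_{c_2}(t_j)$ and $T_{j-1}t_{j-1}=t_jT_{j-1}-\Delta^{-2}\sum_{1\le c_1<c_2\le r}(u_{c_2}-u_{c_1})(q-q^{-1})F_{c_1}(t_{j-1})F_{c_2}(t_j)$.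 Write $[1,r]=\{1,\ldots,r\}$; for $\mathbf k=(k_1,\ldots,k_n)\in[1,r]^n$ set $b_{\mathbf k}:=\prod_{i=1}^n\prod_{1\le j\le r,\,j\ne k_i}\frac{t_i-u_j}{u_{k_i}-u_j}$. For $1\le i,j\le n$ let $B'_{i,j}:=-(q-q^{-1})\sum_{\mathbf k\in[1,r]^n,\ k_i<k_j}b_{\mathbf k}$, and for $1\le i\le n-1$ let $g_i:=T_i+B'_{i,i+1}$. $\mathfrak S(n)$ acts on $R[t_1,\ldots,t_n]$ by $R$-algebra automorphisms via $w.t_i=t_{w(i)}$; $s_j=(j\ j+1)$. *)

theory Defs
  imports "HOL-Computational_Algebra.Polynomial" "HOL-Library.FuncSet" "HOL-Library.Poly_Mapping"
begin

definition rinv :: "'r::comm_ring_1 \<Rightarrow> 'r" where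
  "rinv x = (THE y. x * y = 1)"

definition Delta :: "nat \<Rightarrow> (nat \<Rightarrow> 'r::comm_ring_1) \<Rightarrow> 'r" where
  "Delta r u = (\<Prod>(i,j)\<in>{(i,j). 1 \<le> j \<and> j < i \<and> i \<le> r}. u i - u j)"

definition Fpoly :: "nat \<Rightarrow> (nat \<Rightarrow> 'r::comm_ring_1) \<Rightarrow> nat \<Rightarrow> 'r poly" where
  "Fpoly r u c = (THE p. degree p \<le> r - 1 \<and>
      (\<forall>c'\<in>{1..r}. poly p (u c') = (if c' = c then Delta r u else 0)))"

(* R-algebra structure map: ring homomorphism with central image *)
definition is_alg_map :: "('r::comm_ring_1 \<Rightarrow> 'a::ring_1) \<Rightarrow> bool" where
  "is_alg_map \<phi> \<longleftrightarrow> \<phi> 1 = 1 \<and> (\<forall>x y. \<phi> (x + y) = \<phi> x + \<phi> y)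
     \<and> (\<forall>x y. \<phi> (x * y) = \<phi> x * \<phi> y) \<and> (\<forall>x a. \<phi> x * a = a * \<phi> x)"

definition peval :: "('r::comm_ring_1 \<Rightarrow> 'a::ring_1) \<Rightarrow> 'r poly \<Rightarrow> 'a \<Rightarrow> 'a" where
  "peval \<phi> p x = (\<Sum>k\<le>degree p. \<phi> (coeff p k) * x ^ k)"

definition shoji_corr :: "('r::comm_ring_1 \<Rightarrow> 'a::ring_1) \<Rightarrow> nat \<Rightarrow> 'r \<Rightarrow> (nat \<Rightarrow> 'r)
    \<Rightarrow> 'a \<Rightarrow> 'a \<Rightarrow> 'a" where
  "shoji_corr \<phi> r q u x y = \<phi> ((rinv (Delta r u))^2) *
     (\<Sum>(c1,c2)\<in>{(c1,c2). 1 \<le> c1 \<and> c1 < c2 \<and> c2 \<le> r}.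
        \<phi> ((u c2 - u c1) * (q - rinv q)) * peval \<phi> (Fpoly r u c1) x * peval \<phi> (Fpoly r u c2) y)"

(* t_1..t_n, T_1..T_{n-1} in an R-algebra (via \<phi>) satisfy the defining relations of H_{n,r} *)
definition shoji_rel :: "('r::comm_ring_1 \<Rightarrow> 'a::ring_1) \<Rightarrow> nat \<Rightarrow> nat \<Rightarrow> 'r \<Rightarrow> (nat \<Rightarrow> 'r)
    \<Rightarrow> (nat \<Rightarrow> 'a) \<Rightarrow> (nat \<Rightarrow> 'a) \<Rightarrow> bool" where
  "shoji_rel \<phi> n r q u t T \<longleftrightarrow>
     (\<forall>i\<in>{1..<n}. (T i - \<phi> q) * (T i + \<phi> (rinv q)) = 0)
   \<and> (\<forall>i\<in>{1..n}. prod_list (map (\<lambda>c. t i - \<phi> (u c)) [1..<r+1]) = 0)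
   \<and> (\<forall>i. 1 \<le> i \<and> i + 1 < n \<longrightarrow> T i * T (i+1) * T i = T (i+1) * T i * T (i+1))
   \<and> (\<forall>i\<in>{1..<n}. \<forall>j\<in>{1..<n}. (i + 2 \<le> j \<or> j + 2 \<le> i) \<longrightarrow> T i * T j = T j * T i)
   \<and> (\<forall>i\<in>{1..n}. \<forall>j\<in>{1..n}. t i * t j = t j * t i)
   \<and> (\<forall>j\<in>{1..<n}. \<forall>k\<in>{1..n}. k \<noteq> j \<and> k \<noteq> j + 1 \<longrightarrow> T j * t k = t k * T j)
   \<and> (\<forall>j\<in>{2..n}. T (j-1) * t j = t (j-1) * T (j-1) + shoji_corr \<phi> r q u (t (j-1)) (t j))
   \<and> (\<forall>j\<in>{2..n}. T (j-1) * t (j-1) = t j * T (j-1) - shoji_corr \<phi> r q u (t (j-1)) (t j))"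

definition bk :: "('r::comm_ring_1 \<Rightarrow> 'a::ring_1) \<Rightarrow> nat \<Rightarrow> nat \<Rightarrow> (nat \<Rightarrow> 'r) \<Rightarrow> (nat \<Rightarrow> 'a)
    \<Rightarrow> (nat \<Rightarrow> nat) \<Rightarrow> 'a" where
  "bk \<phi> n r u t k = prod_list (map (\<lambda>i. prod_list (map (\<lambda>j. (t i - \<phi> (u j)) * \<phi> (rinv (u (k i) - u j)))
       (filter (\<lambda>j. j \<noteq> k i) [1..<r+1]))) [1..<n+1])"

definition Bprime :: "('r::comm_ring_1 \<Rightarrow> 'a::ring_1) \<Rightarrow> nat \<Rightarrow> nat \<Rightarrow> 'r \<Rightarrow> (nat \<Rightarrow> 'r)
    \<Rightarrow> (nat \<Rightarrow> 'a) \<Rightarrow> nat \<Rightarrow> nat \<Rightarrow> 'a" where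
  "Bprime \<phi> n r q u t i j = - (\<phi> (q - rinv q) *
     (\<Sum>k\<in>{k\<in>PiE {1..n} (\<lambda>_. {1..r}). k i < k j}. bk \<phi> n r u t k))"

definition gen :: "('r::comm_ring_1 \<Rightarrow> 'a::ring_1) \<Rightarrow> nat \<Rightarrow> nat \<Rightarrow> 'r \<Rightarrow> (nat \<Rightarrow> 'r)
    \<Rightarrow> (nat \<Rightarrow> 'a) \<Rightarrow> (nat \<Rightarrow> 'a) \<Rightarrow> nat \<Rightarrow> 'a" where
  "gen \<phi> n r q u t T i = T i + Bprime \<phi> n r q u t i (i+1)"

definition sref :: "nat \<Rightarrow> nat \<Rightarrow> nat" where
  "sref j i = (if i = j then j + 1 else if i = j + 1 then j else i)"

(* evaluation of a polynomial f in R[X_1..X_n] (monomial \<Rightarrow> coefficient) at X_i := t_(\<sigma> i) *)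
definition mpeval :: "('r::comm_ring_1 \<Rightarrow> 'a::ring_1) \<Rightarrow> nat \<Rightarrow> (nat \<Rightarrow> 'a) \<Rightarrow> (nat \<Rightarrow> nat)
    \<Rightarrow> ((nat \<Rightarrow>\<^sub>0 nat) \<Rightarrow>\<^sub>0 'r) \<Rightarrow> 'a" where
  "mpeval \<phi> n t \<sigma> f = (\<Sum>mo\<in>Poly_Mapping.keys f. \<phi> (Poly_Mapping.lookup f mo) *
      prod_list (map (\<lambda>i. t (\<sigma> i) ^ Poly_Mapping.lookup (mo :: nat \<Rightarrow>\<^sub>0 nat) i) [1..<n+1]))"

end

theory Submission
  imports Defs
begin

text \<open>
  Let \<open>L_c\<close> be the Lagrange basis at the nodes \<open>u_1, \<dots>, u_r\<close> and put \<open>e_{i,c} = L_c(t_i)\<close>.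
  Because \<open>\<Prod>_c (t_i - u_c) = 0\<close>, the \<open>e_{i,c}\<close> commute with all \<open>t_i'\<close>, satisfy
  \<open>t_i e_{i,c} = u_c e_{i,c}\<close> and \<open>\<Sum>_c e_{i,c} = 1\<close>; moreover \<open>F_c = \<Delta> L_c\<close> and
  \<open>b_k = \<Prod>_i e_{i,k_i}\<close>, so \<open>t_i b_k = u_{k_i} b_k\<close>. Writing \<open>e_{j,c1} e_{j+1,c2}\<close> as the sum of the
  \<open>b_k\<close> with \<open>k_j = c1\<close> and \<open>k_{j+1} = c2\<close> turns the correction term in the relations for \<open>T_j\<close>
  into \<open>W_j = (q - q\<^sup>-\<^sup>1) \<Sum>_{k_j < k_{j+1}} (u_{k_{j+1}} - u_{k_j}) b_k\<close>. The eigenvalue relation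
  also shows that \<open>B'_{j,j+1}\<close> commutes with every \<open>t_i\<close> and that
  \<open>B'_{j,j+1} (t_j - t_{j+1}) = W_j\<close>, so adding \<open>B'_{j,j+1}\<close> to \<open>T_j\<close> cancels the correction exactly.
  Polynomials in the \<open>t_i\<close> then follow monomial by monomial.
\<close>

lemma alg_map_1: "is_alg_map \<phi> \<Longrightarrow> \<phi> 1 = 1"
  unfolding is_alg_map_def by blast

lemma alg_map_add: "is_alg_map \<phi> \<Longrightarrow> \<phi> (x + y) = \<phi> x + \<phi> y"
  unfolding is_alg_map_def by blast

lemma alg_map_mult: "is_alg_map \<phi> \<Longrightarrow> \<phi> (x * y) = \<phi> x * \<phi> y"
  unfolding is_alg_map_def by blast

lemma alg_map_central: "is_alg_map \<phi> \<Longrightarrow> \<phi> x * a = a * \<phi> x"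
  unfolding is_alg_map_def by blast

lemma alg_map_0: "is_alg_map \<phi> \<Longrightarrow> \<phi> 0 = 0"
  using alg_map_add[of \<phi> 0 0] by simp

lemma alg_map_uminus: "is_alg_map \<phi> \<Longrightarrow> \<phi> (- x) = - \<phi> x"
  using alg_map_add[of \<phi> x "-x"] alg_map_0[of \<phi>] by (simp add: eq_neg_iff_add_eq_0 add.commute)

lemma alg_map_diff: "is_alg_map \<phi> \<Longrightarrow> \<phi> (x - y) = \<phi> x - \<phi> y"
  using alg_map_add[of \<phi> x "-y"] alg_map_uminus[of \<phi> y] by simp

lemma alg_map_mult3:
  assumes \<phi>: "is_alg_map \<phi>"
  shows "\<phi> a * (\<phi> b * x) * (\<phi> c * y) = \<phi> (a * b * c) * (x * y)"
proof -
  have "x * (\<phi> c * y) = (x * \<phi> c) * y" by (simp add: mult.assoc)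
  also have "x * \<phi> c = \<phi> c * x" by (rule alg_map_central[OF \<phi>, symmetric])
  finally have "x * (\<phi> c * y) = \<phi> c * (x * y)" by (simp add: mult.assoc)
  then show ?thesis by (simp add: alg_map_mult[OF \<phi>] mult.assoc)
qed

section \<open>Evaluating polynomials in an algebra\<close>

lemma peval_eq_sum_atMost:
  assumes "is_alg_map \<phi>" "degree p \<le> N"
  shows "peval \<phi> p x = (\<Sum>k\<le>N. \<phi> (coeff p k) * x ^ k)"
proof -
  have "(\<Sum>k\<le>N. \<phi> (coeff p k) * x ^ k) = (\<Sum>k\<le>degree p. \<phi> (coeff p k) * x ^ k)"
    using assms by (intro sum.mono_neutral_right) (auto simp: coeff_eq_0 alg_map_0)
  thus ?thesis by (simp add: peval_def)
qed

lemma peval_0: "is_alg_map \<phi> \<Longrightarrow> peval \<phi> 0 x = 0"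
  by (simp add: peval_def alg_map_0)

lemma peval_pCons:
  assumes \<phi>: "is_alg_map \<phi>"
  shows "peval \<phi> (pCons c p) x = \<phi> c + x * peval \<phi> p x"
proof -
  have "peval \<phi> (pCons c p) x = (\<Sum>k\<le>Suc (degree p). \<phi> (coeff (pCons c p) k) * x ^ k)"
    using \<phi> by (intro peval_eq_sum_atMost) (auto simp: degree_pCons_le)
  also have "\<dots> = \<phi> c + (\<Sum>k\<le>degree p. \<phi> (coeff p k) * x * x ^ k)"
    by (subst sum.atMost_Suc_shift) (simp add: mult.assoc)
  also have "\<dots> = \<phi> c + x * peval \<phi> p x"
    by (simp add: peval_def sum_distrib_left alg_map_central[OF \<phi>] mult.assoc)
  finally show ?thesis .
qed

lemma peval_add:
  assumes \<phi>: "is_alg_map \<phi>"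
  shows "peval \<phi> (p + q) x = peval \<phi> p x + peval \<phi> q x"
proof -
  let ?N = "max (degree p) (degree q)"
  have "peval \<phi> (p + q) x = (\<Sum>k\<le>?N. \<phi> (coeff (p + q) k) * x ^ k)"
    using \<phi> by (intro peval_eq_sum_atMost) (auto simp: degree_add_le)
  also have "\<dots> = (\<Sum>k\<le>?N. \<phi> (coeff p k) * x ^ k) + (\<Sum>k\<le>?N. \<phi> (coeff q k) * x ^ k)"
    by (simp add: alg_map_add[OF \<phi>] distrib_right sum.distrib)
  also have "\<dots> = peval \<phi> p x + peval \<phi> q x"
    using peval_eq_sum_atMost[OF \<phi>, of p ?N] peval_eq_sum_atMost[OF \<phi>, of q ?N] by simp
  finally show ?thesis .
qed

lemma peval_smult:
  assumes \<phi>: "is_alg_map \<phi>"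
  shows "peval \<phi> (smult c p) x = \<phi> c * peval \<phi> p x"
proof -
  have "peval \<phi> (smult c p) x = (\<Sum>k\<le>degree p. \<phi> (coeff (smult c p) k) * x ^ k)"
    using \<phi> by (intro peval_eq_sum_atMost) (auto simp: degree_smult_le)
  also have "\<dots> = \<phi> c * peval \<phi> p x"
    by (simp add: peval_def sum_distrib_left alg_map_mult[OF \<phi>] mult.assoc)
  finally show ?thesis .
qed

lemma peval_mult:
  assumes \<phi>: "is_alg_map \<phi>"
  shows "peval \<phi> (p * q) x = peval \<phi> p x * peval \<phi> q x"
proof (induction p)
  case (pCons c p)
  have "peval \<phi> (pCons c p * q) x = \<phi> c * peval \<phi> q x + x * (peval \<phi> p x * peval \<phi> q x)"
    using pCons by (simp add: peval_add[OF \<phi>] peval_smult[OF \<phi>] peval_pCons[OF \<phi>] alg_map_0[OF \<phi>])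
  also have "\<dots> = peval \<phi> (pCons c p) x * peval \<phi> q x"
    by (simp add: peval_pCons[OF \<phi>] distrib_right mult.assoc)
  finally show ?case .
qed (simp add: peval_0[OF \<phi>])

lemma peval_1: "is_alg_map \<phi> \<Longrightarrow> peval \<phi> 1 x = 1"
  by (simp add: one_pCons peval_pCons peval_0 alg_map_1)

lemma peval_monic_linear: "is_alg_map \<phi> \<Longrightarrow> peval \<phi> [:- c, 1:] x = x - \<phi> c"
  by (simp add: peval_pCons peval_0 alg_map_1 alg_map_uminus)

lemma peval_sum: "is_alg_map \<phi> \<Longrightarrow> peval \<phi> (sum f A) x = (\<Sum>a\<in>A. peval \<phi> (f a) x)"
  by (induction A rule: infinite_finite_induct) (auto simp: peval_0 peval_add)

lemma peval_prod_list:
  "is_alg_map \<phi> \<Longrightarrow> peval \<phi> (prod_list (map f xs)) x = prod_list (map (\<lambda>a. peval \<phi> (f a) x) xs)"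
  by (induction xs) (auto simp: peval_1 peval_mult)

lemma commute_power:
  fixes x y :: "'a::monoid_mult"
  assumes "y * x = x * y"
  shows "y * x ^ k = x ^ k * y"
proof (induction k)
  case (Suc k)
  have "y * x ^ Suc k = x * (y * x ^ k)" using assms by (simp add: mult.assoc[symmetric])
  then show ?case by (simp add: Suc mult.assoc)
qed simp

lemma commute_peval:
  assumes \<phi>: "is_alg_map \<phi>" and yx: "y * x = x * y"
  shows "y * peval \<phi> p x = peval \<phi> p x * y"
  unfolding peval_def sum_distrib_left sum_distrib_right
proof (intro sum.cong refl)
  fix k
  have "y * (\<phi> (coeff p k) * x ^ k) = (y * \<phi> (coeff p k)) * x ^ k" by (simp add: mult.assoc)
  also have "y * \<phi> (coeff p k) = \<phi> (coeff p k) * y" by (rule alg_map_central[OF \<phi>, symmetric])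
  finally have "y * (\<phi> (coeff p k) * x ^ k) = \<phi> (coeff p k) * (y * x ^ k)" by (simp add: mult.assoc)
  then show "y * (\<phi> (coeff p k) * x ^ k) = \<phi> (coeff p k) * x ^ k * y"
    by (simp add: commute_power[OF yx] mult.assoc)
qed

section \<open>The Lagrange basis at unit-separated nodes\<close>

lemma mult_rinv_unit:
  fixes x :: "'r::comm_ring_1"
  assumes "x dvd 1"
  shows "x * rinv x = 1"
proof -
  obtain y where y: "x * y = 1" using assms by (auto simp: dvd_def)
  have "x * (THE y. x * y = 1) = 1"
  proof (rule theI[of "\<lambda>y. x * y = 1" y])
    fix z assume "x * z = 1"
    then show "z = y" using y by (metis mult.commute mult_1_left mult.assoc)
  qed (fact y)
  thus ?thesis by (simp add: rinv_def)
qed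

lemma Delta_unit_imp_diff_unit:
  fixes u :: "nat \<Rightarrow> 'r::comm_ring_1"
  assumes D: "Delta r u dvd 1" and "i \<in> {1..r}" "j \<in> {1..r}" "i \<noteq> j"
  shows "(u i - u j) dvd 1"
proof -
  have *: "(u a - u b) dvd 1" if "1 \<le> b" "b < a" "a \<le> r" for a b
  proof -
    have "finite {(i, j). 1 \<le> j \<and> j < i \<and> i \<le> r}"
      by (rule finite_subset[of _ "{1..r} \<times> {1..r}"]) auto
    then have "(u a - u b) dvd Delta r u"
      unfolding Delta_def using that dvd_prodI[of _ "(a, b)" "\<lambda>(i, j). u i - u j"] by auto
    thus ?thesis using D dvd_trans by blast
  qed
  show ?thesis
  proof (cases "j < i")
    case False
    then have "(u j - u i) dvd 1" using * assms by auto
    then show ?thesis by (metis minus_diff_eq minus_dvd_iff)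
  qed (use * assms in auto)
qed

definition lagrange_basis :: "nat \<Rightarrow> (nat \<Rightarrow> 'r::comm_ring_1) \<Rightarrow> nat \<Rightarrow> 'r poly" where
  "lagrange_basis r u c = (\<Prod>j\<in>{1..r} - {c}. smult (rinv (u c - u j)) [:- u j, 1:])"

lemma lagrange_basis_prod_list:
  "lagrange_basis r u c =
     prod_list (map (\<lambda>j. smult (rinv (u c - u j)) [:- u j, 1:]) (filter (\<lambda>j. j \<noteq> c) [1..<r+1]))"
proof -
  have "set (filter (\<lambda>j. j \<noteq> c) [1..<r+1]) = {1..r} - {c}" by auto
  thus ?thesis unfolding lagrange_basis_def
    by (metis (no_types, lifting) distinct_filter distinct_upt prod.distinct_set_conv_list)
qed

locale lagrange_nodes =
  fixes r :: nat and u :: "nat \<Rightarrow> 'r::idom"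
  assumes diff_unit: "\<And>i j. i \<in> {1..r} \<Longrightarrow> j \<in> {1..r} \<Longrightarrow> i \<noteq> j \<Longrightarrow> (u i - u j) dvd 1"
    and nodes_nonempty: "r \<ge> 1"
begin

lemma inj_on_nodes: "inj_on u {1..r}"
proof (rule inj_onI, rule ccontr)
  fix i j assume "i \<in> {1..r}" "j \<in> {1..r}" "u i = u j" "i \<noteq> j"
  then show False using diff_unit[of i j] by simp
qed

lemma poly_lagrange_basis:
  assumes "c \<in> {1..r}" "c' \<in> {1..r}"
  shows "poly (lagrange_basis r u c) (u c') = (if c' = c then 1 else 0)"
proof -
  have "poly (lagrange_basis r u c) (u c') = (\<Prod>j\<in>{1..r} - {c}. rinv (u c - u j) * (u c' - u j))"
    by (simp add: lagrange_basis_def poly_prod algebra_simps)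
  also have "\<dots> = (if c' = c then 1 else 0)"
    using assms diff_unit by (auto simp: mult_rinv_unit mult.commute intro: prod.neutral prod_zero)
  finally show ?thesis .
qed

lemma degree_lagrange_basis:
  assumes "c \<in> {1..r}"
  shows "degree (lagrange_basis r u c) \<le> r - 1"
proof -
  have "degree (lagrange_basis r u c) \<le> (\<Sum>j\<in>{1..r} - {c}. degree (smult (rinv (u c - u j)) [:- u j, 1:]))"
    unfolding lagrange_basis_def by (rule order.trans[OF degree_prod_sum_le]) (simp_all add: o_def)
  also have "\<dots> \<le> (\<Sum>j\<in>{1..r} - {c}. 1)"
    by (intro sum_mono) (auto intro: order.trans[OF degree_smult_le])
  also have "\<dots> = r - 1" using assms by simp
  finally show ?thesis .
qed

lemma poly_eq_if_eq_at_nodes: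
  assumes "degree p \<le> r - 1" "degree p' \<le> r - 1"
    and "\<And>c. c \<in> {1..r} \<Longrightarrow> poly p (u c) = poly p' (u c)"
  shows "p = p'"
proof (rule poly_eqI_degree[of "u ` {1..r}"])
  have "card (u ` {1..r}) = r" using inj_on_nodes by (simp add: card_image)
  thus "card (u ` {1..r}) > degree p" "card (u ` {1..r}) > degree p'"
    using assms nodes_nonempty by linarith+
qed (use assms in auto)

lemma Fpoly_eq_smult_lagrange_basis:
  assumes c: "c \<in> {1..r}"
  shows "Fpoly r u c = smult (Delta r u) (lagrange_basis r u c)"
  unfolding Fpoly_def
proof (rule the_equality)
  show "degree (smult (Delta r u) (lagrange_basis r u c)) \<le> r - 1 \<and>
    (\<forall>c'\<in>{1..r}. poly (smult (Delta r u) (lagrange_basis r u c)) (u c') = (if c' = c then Delta r u else 0))"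
    using degree_lagrange_basis[OF c] poly_lagrange_basis[OF c] degree_smult_le order.trans
    by fastforce
  fix p assume "degree p \<le> r - 1 \<and> (\<forall>c'\<in>{1..r}. poly p (u c') = (if c' = c then Delta r u else 0))"
  then show "p = smult (Delta r u) (lagrange_basis r u c)"
    using degree_lagrange_basis[OF c] poly_lagrange_basis[OF c] degree_smult_le order.trans
    by (intro poly_eq_if_eq_at_nodes) fastforce+
qed

lemma sum_lagrange_basis: "(\<Sum>c\<in>{1..r}. lagrange_basis r u c) = 1"
proof (rule poly_eq_if_eq_at_nodes)
  show "degree (\<Sum>c\<in>{1..r}. lagrange_basis r u c) \<le> r - 1"
    by (intro degree_sum_le degree_lagrange_basis) auto
  fix c' assume "c' \<in> {1..r}"
  then show "poly (\<Sum>c\<in>{1..r}. lagrange_basis r u c) (u c') = poly 1 (u c')"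
    by (simp add: poly_sum poly_lagrange_basis)
qed simp

lemma node_factor_mult_lagrange_basis:
  assumes "c \<in> {1..r}"
  shows "[:- u c, 1:] * lagrange_basis r u c =
           smult (\<Prod>j\<in>{1..r} - {c}. rinv (u c - u j)) (\<Prod>j\<in>{1..r}. [:- u j, 1:])"
proof -
  have "(\<Prod>j\<in>{1..r}. [:- u j, 1:]) = [:- u c, 1:] * (\<Prod>j\<in>{1..r} - {c}. [:- u j, 1:])"
    using assms by (simp add: prod.remove)
  then show ?thesis by (simp only: lagrange_basis_def prod_smult mult_smult_right)
qed

end

lemma prod_list_map_eq_1:
  "(\<And>x. x \<in> set xs \<Longrightarrow> f x = (1::'a::monoid_mult)) \<Longrightarrow> prod_list (map f xs) = 1"
  by (induction xs) auto

lemma commute_prod_list: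
  fixes x :: "'a::monoid_mult"
  shows "(\<And>y. y \<in> set xs \<Longrightarrow> x * f y = f y * x) \<Longrightarrow> x * prod_list (map f xs) = prod_list (map f xs) * x"
proof (induction xs)
  case (Cons a xs)
  have "x * prod_list (map f (a # xs)) = f a * (x * prod_list (map f xs))"
    using Cons.prems by (simp add: mult.assoc[symmetric])
  then show ?case using Cons by (simp add: mult.assoc)
qed simp

lemma prod_list_mult_eigen:
  fixes x a :: "'a::monoid_mult"
  assumes "\<And>y. y \<in> set xs \<Longrightarrow> f y * x = x * f y" and "y0 \<in> set xs"
    and "f y0 * x = a * f y0" and "\<And>z. a * z = z * a"
  shows "prod_list (map f xs) * x = a * prod_list (map f xs)"
  using assms
proof (induction xs)
  case (Cons b xs)
  have "prod_list (map f (b # xs)) * x = f b * (prod_list (map f xs) * x)"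
    by (simp add: mult.assoc)
  also have "\<dots> = a * prod_list (map f (b # xs))"
  proof (cases "y0 \<in> set xs")
    case True
    have "prod_list (map f xs) * x = a * prod_list (map f xs)"
      by (intro Cons.IH) (use Cons.prems True in auto)
    then have "f b * (prod_list (map f xs) * x) = (f b * a) * prod_list (map f xs)"
      by (simp add: mult.assoc)
    also have "f b * a = a * f b" by (rule Cons.prems(4)[symmetric])
    finally show ?thesis by (simp add: mult.assoc)
  next
    case False
    then have "b = y0" using Cons.prems by simp
    have "prod_list (map f xs) * x = x * prod_list (map f xs)"
      using commute_prod_list[of xs x f] Cons.prems(1) by fastforce
    then show ?thesis using Cons.prems(3) \<open>b = y0\<close> by (simp add: mult.assoc[symmetric])
  qed
  finally show ?case .
qed simp

lemma prod_list_sum_PiE: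
  fixes f :: "'i \<Rightarrow> 'b \<Rightarrow> 'c::semiring_1"
  assumes "distinct xs" and "\<And>x. x \<in> set xs \<Longrightarrow> finite (B x)"
  shows "prod_list (map (\<lambda>x. \<Sum>y\<in>B x. f x y) xs) =
           (\<Sum>g\<in>PiE (set xs) B. prod_list (map (\<lambda>x. f x (g x)) xs))"
  using assms
proof (induction xs)
  case (Cons x xs)
  let ?P = "\<lambda>g. prod_list (map (\<lambda>x'. f x' (g x')) xs)"
  have P_upd: "?P g = ?P (g(x := undefined))" for g
    using Cons.prems by (intro arg_cong[where f=prod_list] map_cong) auto
  have "(\<Sum>g\<in>PiE (set (x # xs)) B. prod_list (map (\<lambda>x'. f x' (g x')) (x # xs))) =
          (\<Sum>g\<in>PiE (insert x (set xs)) B. f x (g x) * ?P (g(x := undefined)))"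
    by (simp only: P_upd[symmetric]) simp
  also have "\<dots> = (\<Sum>(y, g)\<in>B x \<times> PiE (set xs) B. f x y * ?P g)"
    using Cons.prems
    by (intro sum.reindex_bij_witness[of _ "\<lambda>(y, g). g(x := y)" "\<lambda>g. (g x, g(x := undefined))"])
       (auto simp: PiE_def extensional_def)
  also have "\<dots> = (\<Sum>y\<in>B x. \<Sum>g\<in>PiE (set xs) B. f x y * ?P g)"
    by (rule sum.cartesian_product[symmetric])
  also have "\<dots> = (\<Sum>y\<in>B x. f x y) * (\<Sum>g\<in>PiE (set xs) B. ?P g)"
    by (subst sum_distrib_right) (simp only: sum_distrib_left)
  finally show ?case using Cons by simp
qed simp

section \<open>The modified Ariki--Koike algebra\<close>

locale shoji_algebra =
  fixes \<phi> :: "'r::idom \<Rightarrow> 'a::ring_1" and n r :: nat and q :: 'r and u :: "nat \<Rightarrow> 'r"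
    and t T :: "nat \<Rightarrow> 'a"
  assumes Delta_unit: "Delta r u dvd 1"
    and r_pos: "r \<ge> 1"
    and alg: "is_alg_map \<phi>"
    and rel: "shoji_rel \<phi> n r q u t T"
begin

sublocale lagrange_nodes r u
  by unfold_locales (use Delta_unit_imp_diff_unit[OF Delta_unit] r_pos in auto)

lemma central: "\<phi> x * a = a * \<phi> x"
  by (rule alg_map_central[OF alg])

lemma t_commute: "i \<in> {1..n} \<Longrightarrow> i' \<in> {1..n} \<Longrightarrow> t i * t i' = t i' * t i"
  using rel by (simp add: shoji_rel_def)

lemma t_annihilated: "i \<in> {1..n} \<Longrightarrow> prod_list (map (\<lambda>c. t i - \<phi> (u c)) [1..<r+1]) = 0"
  using rel by (simp add: shoji_rel_def)

lemma T_t_commute: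
  "j \<in> {1..<n} \<Longrightarrow> i \<in> {1..n} \<Longrightarrow> i \<noteq> j \<Longrightarrow> i \<noteq> j + 1 \<Longrightarrow> T j * t i = t i * T j"
  using rel by (simp add: shoji_rel_def)

lemma T_t_Suc:
  assumes "j \<in> {1..<n}"
  shows "T j * t (j+1) = t j * T j + shoji_corr \<phi> r q u (t j) (t (j+1))"
proof -
  have "\<forall>j\<in>{2..n}. T (j-1) * t j = t (j-1) * T (j-1) + shoji_corr \<phi> r q u (t (j-1)) (t j)"
    using rel unfolding shoji_rel_def by blast
  moreover have "j + 1 \<in> {2..n}" using assms by auto
  ultimately show ?thesis by fastforce
qed

lemma T_t_same:
  assumes "j \<in> {1..<n}"
  shows "T j * t j = t (j+1) * T j - shoji_corr \<phi> r q u (t j) (t (j+1))"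
proof -
  have "\<forall>j\<in>{2..n}. T (j-1) * t (j-1) = t j * T (j-1) - shoji_corr \<phi> r q u (t (j-1)) (t j)"
    using rel unfolding shoji_rel_def by blast
  moreover have "j + 1 \<in> {2..n}" using assms by auto
  ultimately show ?thesis by fastforce
qed

definition idem :: "nat \<Rightarrow> nat \<Rightarrow> 'a" where
  "idem i c = peval \<phi> (lagrange_basis r u c) (t i)"

lemma t_commute_idem: "i \<in> {1..n} \<Longrightarrow> i' \<in> {1..n} \<Longrightarrow> t i' * idem i c = idem i c * t i'"
  unfolding idem_def by (rule commute_peval[OF alg]) (simp add: t_commute)

lemma t_mult_idem:
  assumes i: "i \<in> {1..n}" and c: "c \<in> {1..r}"
  shows "t i * idem i c = \<phi> (u c) * idem i c"
proof -
  have "(\<Prod>j\<in>{1..r}. [:- u j, 1:]) = prod_list (map (\<lambda>j. [:- u j, 1:]) [1..<r+1])"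
    by (metis atLeastLessThanSuc_atLeastAtMost Suc_eq_plus1 distinct_upt prod.distinct_set_conv_list set_upt)
  then have "peval \<phi> (\<Prod>j\<in>{1..r}. [:- u j, 1:]) (t i) = prod_list (map (\<lambda>c. t i - \<phi> (u c)) [1..<r+1])"
    by (simp only: peval_prod_list[OF alg] peval_monic_linear[OF alg])
  then have "peval \<phi> ([:- u c, 1:] * lagrange_basis r u c) (t i) = 0"
    by (simp only: node_factor_mult_lagrange_basis[OF c] peval_smult[OF alg] t_annihilated[OF i]
        mult_zero_right)
  then have "(t i - \<phi> (u c)) * idem i c = 0"
    by (simp only: peval_mult[OF alg] peval_monic_linear[OF alg] idem_def)
  then show ?thesis by (simp add: algebra_simps)
qed

lemma sum_idem: "(\<Sum>c\<in>{1..r}. idem i c) = 1"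
proof -
  have "(\<Sum>c\<in>{1..r}. idem i c) = peval \<phi> (\<Sum>c\<in>{1..r}. lagrange_basis r u c) (t i)"
    unfolding idem_def by (rule peval_sum[OF alg, symmetric])
  also have "\<dots> = 1" by (simp only: sum_lagrange_basis peval_1[OF alg])
  finally show ?thesis .
qed

lemma peval_Fpoly: "c \<in> {1..r} \<Longrightarrow> peval \<phi> (Fpoly r u c) (t i) = \<phi> (Delta r u) * idem i c"
  by (simp add: Fpoly_eq_smult_lagrange_basis peval_smult[OF alg] idem_def)

lemma bk_eq_prod_idem: "bk \<phi> n r u t k = prod_list (map (\<lambda>i. idem i (k i)) [1..<n+1])"
proof -
  have "peval \<phi> (smult a [:- b, 1:]) x = (x - \<phi> b) * \<phi> a" for a b x
    by (simp only: peval_smult[OF alg] peval_monic_linear[OF alg]) (rule central)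
  then show ?thesis
    unfolding bk_def idem_def lagrange_basis_prod_list
    by (simp only: peval_prod_list[OF alg])
qed

definition indices :: "(nat \<Rightarrow> nat) set" where
  "indices = PiE {1..n} (\<lambda>_. {1..r})"

definition ascents :: "nat \<Rightarrow> (nat \<Rightarrow> nat) set" where
  "ascents j = {k \<in> indices. k j < k (j+1)}"

lemma finite_ascents: "finite (ascents j)"
  by (simp add: ascents_def indices_def finite_PiE)

lemma bk_mult_t:
  assumes k: "k \<in> indices" and i: "i \<in> {1..n}"
  shows "bk \<phi> n r u t k * t i = \<phi> (u (k i)) * bk \<phi> n r u t k"
  unfolding bk_eq_prod_idem
proof (rule prod_list_mult_eigen)
  show "idem y (k y) * t i = t i * idem y (k y)" if "y \<in> set [1..<n+1]" for y
    using t_commute_idem[of y i] that i by auto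
  show "i \<in> set [1..<n+1]" using i by auto
  have "k i \<in> {1..r}" using k i by (auto simp: indices_def)
  then show "idem i (k i) * t i = \<phi> (u (k i)) * idem i (k i)"
    using t_commute_idem[of i i] t_mult_idem[of i "k i"] i by auto
qed (rule central)

lemma t_commute_bk: "i \<in> {1..n} \<Longrightarrow> t i * bk \<phi> n r u t k = bk \<phi> n r u t k * t i"
  unfolding bk_eq_prod_idem by (rule commute_prod_list) (auto intro: t_commute_idem)

text \<open>This is \<open>W_j\<close>, the correction term of the relations, expanded in the \<open>b_k\<close>.\<close>

definition ascent_sum :: "nat \<Rightarrow> 'a" where
  "ascent_sum j = (\<Sum>k\<in>ascents j. \<phi> ((u (k (j+1)) - u (k j)) * (q - rinv q)) * bk \<phi> n r u t k)"

lemma Bprime_eq: "Bprime \<phi> n r q u t j (j+1) = - (\<phi> (q - rinv q) * (\<Sum>k\<in>ascents j. bk \<phi> n r u t k))"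
  by (simp add: Bprime_def ascents_def indices_def)

lemma t_commute_Bprime:
  assumes "i \<in> {1..n}"
  shows "t i * Bprime \<phi> n r q u t j (j+1) = Bprime \<phi> n r q u t j (j+1) * t i"
proof -
  have "t i * (\<Sum>k\<in>ascents j. bk \<phi> n r u t k) = (\<Sum>k\<in>ascents j. bk \<phi> n r u t k) * t i"
    unfolding sum_distrib_left sum_distrib_right using assms by (simp add: t_commute_bk)
  then show ?thesis
    unfolding Bprime_eq by (simp add: mult.assoc[symmetric] central[symmetric]) (simp add: mult.assoc)
qed

lemma Bprime_mult_t_diff:
  assumes "j \<in> {1..<n}"
  shows "Bprime \<phi> n r q u t j (j+1) * (t j - t (j+1)) = ascent_sum j"
proof -
  have "(\<Sum>k\<in>ascents j. bk \<phi> n r u t k) * (t j - t (j+1)) =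
          - (\<Sum>k\<in>ascents j. \<phi> (u (k (j+1)) - u (k j)) * bk \<phi> n r u t k)"
    unfolding sum_distrib_right sum_negf[symmetric]
  proof (intro sum.cong refl)
    fix k assume "k \<in> ascents j"
    then have "k \<in> indices" by (simp add: ascents_def)
    with assms show "bk \<phi> n r u t k * (t j - t (j+1)) = - (\<phi> (u (k (j+1)) - u (k j)) * bk \<phi> n r u t k)"
      by (simp add: right_diff_distrib left_diff_distrib bk_mult_t alg_map_diff[OF alg])
  qed
  then have "Bprime \<phi> n r q u t j (j+1) * (t j - t (j+1)) =
      \<phi> (q - rinv q) * (\<Sum>k\<in>ascents j. \<phi> (u (k (j+1)) - u (k j)) * bk \<phi> n r u t k)"
    unfolding Bprime_eq by (simp only: mult_minus_left mult.assoc mult_minus_right minus_minus)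
  also have "\<dots> = ascent_sum j"
    unfolding ascent_sum_def sum_distrib_left
    by (intro sum.cong refl) (simp add: alg_map_mult[OF alg] mult.assoc mult.commute[of _ "q - rinv q"])
  finally show ?thesis .
qed

lemma pinned_indices_eq_PiE:
  assumes j: "j \<in> {1..<n}" and c1: "c1 \<in> {1..r}" and c2: "c2 \<in> {1..r}"
  shows "{k \<in> indices. k j = c1 \<and> k (j+1) = c2} =
           PiE {1..n} (\<lambda>i. if i = j then {c1} else if i = j+1 then {c2} else {1..r})"
    (is "_ = PiE {1..n} ?C")
proof -
  have "(\<forall>i\<in>{1..n}. k i \<in> ?C i) \<longleftrightarrow> (\<forall>i\<in>{1..n}. k i \<in> {1..r}) \<and> k j = c1 \<and> k (j+1) = c2" for k
  proof
    assume C: "\<forall>i\<in>{1..n}. k i \<in> ?C i"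
    have "k j = c1" "k (j+1) = c2"
      using bspec[OF C, of j] bspec[OF C, of "j+1"] j by auto
    moreover have "k i \<in> {1..r}" if "i \<in> {1..n}" for i
      using C that c1 c2 by (auto dest!: bspec[of _ _ i] split: if_split_asm)
    ultimately show "(\<forall>i\<in>{1..n}. k i \<in> {1..r}) \<and> k j = c1 \<and> k (j+1) = c2" by blast
  qed auto
  then show ?thesis
    unfolding indices_def set_eq_iff PiE_iff mem_Collect_eq by blast
qed

lemma sum_bk_fixed_pair:
  assumes j: "j \<in> {1..<n}" and c1: "c1 \<in> {1..r}" and c2: "c2 \<in> {1..r}"
  shows "(\<Sum>k\<in>{k \<in> indices. k j = c1 \<and> k (j+1) = c2}. bk \<phi> n r u t k) = idem j c1 * idem (j+1) c2"
proof -
  define C where "C i = (if i = j then {c1} else if i = j+1 then {c2} else {1..r})" for i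
  define e where "e i = (if i = j then idem j c1 else if i = j+1 then idem (j+1) c2 else 1)" for i
  have set_upt: "set [1..<n+1] = {1..n}" by auto
  have "(\<Sum>k\<in>{k \<in> indices. k j = c1 \<and> k (j+1) = c2}. bk \<phi> n r u t k) =
      prod_list (map (\<lambda>i. \<Sum>c\<in>C i. idem i c) [1..<n+1])"
    unfolding pinned_indices_eq_PiE[OF assms] C_def[symmetric] bk_eq_prod_idem set_upt[symmetric]
    by (intro prod_list_sum_PiE[symmetric]) (auto simp: C_def)
  also have "(\<lambda>i. \<Sum>c\<in>C i. idem i c) = e"
    by (rule ext) (simp add: C_def e_def sum_idem[simplified])
  also have "[1..<n+1] = [1..<j] @ j # (j+1) # [j+2..<n+1]"
    using j upt_add_eq_append[of 1 j "n+1-j"] by (auto simp: upt_conv_Cons)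
  also have "prod_list (map e ([1..<j] @ j # (j+1) # [j+2..<n+1])) = idem j c1 * idem (j+1) c2"
  proof -
    have "prod_list (map e [1..<j]) = 1" "prod_list (map e [j+2..<n+1]) = 1"
      by (auto intro: prod_list_map_eq_1 simp: e_def)
    then show ?thesis by (simp add: e_def)
  qed
  finally show ?thesis .
qed

lemma shoji_corr_eq_sum_idem:
  "shoji_corr \<phi> r q u (t i) (t i') =
     (\<Sum>(c1, c2)\<in>{(c1, c2). 1 \<le> c1 \<and> c1 < c2 \<and> c2 \<le> r}.
        \<phi> ((u c2 - u c1) * (q - rinv q)) * (idem i c1 * idem i' c2))"
  unfolding shoji_corr_def sum_distrib_left
proof (intro sum.cong refl, clarify)
  fix c1 c2 assume "1 \<le> c1" "c1 < c2" "c2 \<le> r"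
  then have c: "c1 \<in> {1..r}" "c2 \<in> {1..r}" by auto
  have D_cancel: "\<phi> (rinv (Delta r u) ^ 2) * (\<phi> (w * Delta r u * Delta r u) * x) = \<phi> w * x" for w x
  proof -
    have "\<phi> (rinv (Delta r u) ^ 2) * (\<phi> (w * Delta r u * Delta r u) * x) =
        \<phi> (rinv (Delta r u) ^ 2 * (w * Delta r u * Delta r u)) * x"
      by (simp only: mult.assoc[symmetric] alg_map_mult[OF alg])
    also have "rinv (Delta r u) ^ 2 * (w * Delta r u * Delta r u) =
        w * ((Delta r u * rinv (Delta r u)) * (Delta r u * rinv (Delta r u)))"
      by (simp add: power2_eq_square ac_simps)
    finally show ?thesis using mult_rinv_unit[OF Delta_unit] by simp
  qed
  show "\<phi> (rinv (Delta r u) ^ 2) * (\<phi> ((u c2 - u c1) * (q - rinv q)) * peval \<phi> (Fpoly r u c1) (t i) *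
          peval \<phi> (Fpoly r u c2) (t i')) =
        \<phi> ((u c2 - u c1) * (q - rinv q)) * (idem i c1 * idem i' c2)"
    by (simp only: peval_Fpoly c alg_map_mult3[OF alg] D_cancel)
qed

lemma shoji_corr_eq_ascent_sum:
  assumes j: "j \<in> {1..<n}"
  shows "shoji_corr \<phi> r q u (t j) (t (j+1)) = ascent_sum j"
proof -
  let ?P = "{(c1, c2). 1 \<le> c1 \<and> c1 < c2 \<and> c2 \<le> r}"
  let ?w = "\<lambda>k. \<phi> ((u (k (j+1)) - u (k j)) * (q - rinv q)) * bk \<phi> n r u t k"
  have "(\<lambda>k. (k j, k (j+1))) ` ascents j \<subseteq> ?P"
    using j by (auto simp: ascents_def indices_def PiE_iff)
  moreover have "finite ?P"
    by (rule finite_subset[of _ "{1..r} \<times> {1..r}"]) auto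
  ultimately have "ascent_sum j = (\<Sum>p\<in>?P. \<Sum>k\<in>{k \<in> ascents j. (k j, k (j+1)) = p}. ?w k)"
    unfolding ascent_sum_def by (intro sum.group[symmetric] finite_ascents)
  also have "\<dots> = shoji_corr \<phi> r q u (t j) (t (j+1))"
    unfolding shoji_corr_eq_sum_idem
  proof (intro sum.cong refl, clarify)
    fix c1 c2 assume "1 \<le> c1" "c1 < c2" "c2 \<le> r"
    then have "{k \<in> ascents j. (k j, k (j+1)) = (c1, c2)} = {k \<in> indices. k j = c1 \<and> k (j+1) = c2}"
      by (auto simp: ascents_def)
    moreover have "c1 \<in> {1..r}" "c2 \<in> {1..r}" using \<open>1 \<le> c1\<close> \<open>c1 < c2\<close> \<open>c2 \<le> r\<close> by auto
    ultimately show "(\<Sum>k\<in>{k \<in> ascents j. (k j, k (j+1)) = (c1, c2)}. ?w k) =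
        \<phi> ((u c2 - u c1) * (q - rinv q)) * (idem j c1 * idem (j+1) c2)"
      using sum_bk_fixed_pair[OF j] by (simp add: sum_distrib_left[symmetric])
  qed
  finally show ?thesis ..
qed

lemma gen_mult_t:
  assumes j: "j \<in> {1..<n}" and i: "i \<in> {1..n}"
  shows "gen \<phi> n r q u t T j * t i = t (sref j i) * gen \<phi> n r q u t T j"
proof -
  let ?B = "Bprime \<phi> n r q u t j (j+1)"
  have gen: "gen \<phi> n r q u t T j = T j + ?B" by (simp add: gen_def)
  have B_t: "?B * t i' = t i' * ?B" if "i' \<in> {1..n}" for i'
    using t_commute_Bprime[OF that] by simp
  have B_diff: "?B * t j = ?B * t (j+1) + ascent_sum j"
    using Bprime_mult_t_diff[OF j] by (simp add: algebra_simps)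
  have j_range: "j \<in> {1..n}" "j + 1 \<in> {1..n}" using j by auto
  consider "i = j" | "i = j+1" | "i \<noteq> j" "i \<noteq> j+1" by blast
  then show ?thesis
  proof cases
    case 1
    have "gen \<phi> n r q u t T j * t j = (t (j+1) * T j - ascent_sum j) + (?B * t (j+1) + ascent_sum j)"
      using T_t_same[OF j] shoji_corr_eq_ascent_sum[OF j] B_diff by (simp add: gen distrib_right)
    also have "\<dots> = t (j+1) * gen \<phi> n r q u t T j"
      using B_t[OF j_range(2)] by (simp add: gen distrib_left)
    finally show ?thesis using 1 by (simp add: sref_def)
  next
    case 2
    have "gen \<phi> n r q u t T j * t (j+1) = (t j * T j + ascent_sum j) + (?B * t j - ascent_sum j)"
      using T_t_Suc[OF j] shoji_corr_eq_ascent_sum[OF j] B_diff by (simp add: gen distrib_right)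
    also have "\<dots> = t j * gen \<phi> n r q u t T j"
      using B_t[OF j_range(1)] by (simp add: gen distrib_left)
    finally show ?thesis using 2 by (simp add: sref_def)
  next
    case 3
    then show ?thesis
      using T_t_commute[OF j i] B_t[OF i] by (simp add: gen sref_def distrib_left distrib_right)
  qed
qed

lemma gen_mult_monomial:
  assumes j: "j \<in> {1..<n}"
  shows "set xs \<subseteq> {1..n} \<Longrightarrow> gen \<phi> n r q u t T j * prod_list (map (\<lambda>i. t i ^ m i) xs)
     = prod_list (map (\<lambda>i. t (sref j i) ^ m i) xs) * gen \<phi> n r q u t T j"
proof (induction xs)
  case (Cons a xs)
  let ?g = "gen \<phi> n r q u t T j"
  have a: "a \<in> {1..n}" using Cons.prems by auto
  have "?g * t a ^ k = t (sref j a) ^ k * ?g" for k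
    by (induction k) (simp_all add: mult.assoc[symmetric] gen_mult_t[OF j a], simp add: mult.assoc)
  then have "?g * prod_list (map (\<lambda>i. t i ^ m i) (a # xs)) =
      t (sref j a) ^ m a * (?g * prod_list (map (\<lambda>i. t i ^ m i) xs))"
    by (simp add: mult.assoc[symmetric])
  then show ?case using Cons by (simp add: mult.assoc)
qed simp

lemma gen_mult_mpeval:
  assumes j: "j \<in> {1..<n}"
  shows "gen \<phi> n r q u t T j * mpeval \<phi> n t id f = mpeval \<phi> n t (sref j) f * gen \<phi> n r q u t T j"
  unfolding mpeval_def sum_distrib_left sum_distrib_right
proof (intro sum.cong refl)
  fix mo
  let ?g = "gen \<phi> n r q u t T j" and ?c = "\<phi> (Poly_Mapping.lookup f mo)"
  have "?g * (?c * prod_list (map (\<lambda>i. t (id i) ^ Poly_Mapping.lookup mo i) [1..<n+1]))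
      = (?g * ?c) * prod_list (map (\<lambda>i. t i ^ Poly_Mapping.lookup mo i) [1..<n+1])"
    by (simp add: mult.assoc)
  also have "?g * ?c = ?c * ?g" by (rule central[symmetric])
  also have "?c * ?g * prod_list (map (\<lambda>i. t i ^ Poly_Mapping.lookup mo i) [1..<n+1])
      = ?c * (?g * prod_list (map (\<lambda>i. t i ^ Poly_Mapping.lookup mo i) [1..<n+1]))"
    by (simp add: mult.assoc)
  also have "\<dots> = ?c * (prod_list (map (\<lambda>i. t (sref j i) ^ Poly_Mapping.lookup mo i) [1..<n+1]) * ?g)"
    by (subst gen_mult_monomial[OF j]) auto
  finally show "?g * (?c * prod_list (map (\<lambda>i. t (id i) ^ Poly_Mapping.lookup mo i) [1..<n+1]))
      = ?c * prod_list (map (\<lambda>i. t (sref j i) ^ Poly_Mapping.lookup mo i) [1..<n+1]) * ?g"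
    by (simp add: mult.assoc)
qed

end

theorem proposition3p3:
  fixes \<phi> :: "'r::idom \<Rightarrow> 'a::ring_1" and n r :: nat and q :: 'r and u :: "nat \<Rightarrow> 'r"
    and t T :: "nat \<Rightarrow> 'a"
  assumes "n \<ge> 2" and "r \<ge> 1" and "q dvd 1" and "Delta r u dvd 1"
    and "is_alg_map \<phi>" and "shoji_rel \<phi> n r q u t T"
  shows "(\<forall>j\<in>{1..<n}. \<forall>i\<in>{1..n}.
            gen \<phi> n r q u t T j * t i = t (sref j i) * gen \<phi> n r q u t T j)
       \<and> (\<forall>j\<in>{1..<n}. \<forall>f :: (nat \<Rightarrow>\<^sub>0 nat) \<Rightarrow>\<^sub>0 'r. (\<forall>m\<in>Poly_Mapping.keys f. Poly_Mapping.keys m \<subseteq> {1..n}) \<longrightarrow>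
            gen \<phi> n r q u t T j * mpeval \<phi> n t id f = mpeval \<phi> n t (sref j) f * gen \<phi> n r q u t T j)"
proof -
  interpret shoji_algebra \<phi> n r q u t T
    by unfold_locales (use assms in auto)
  show ?thesis using gen_mult_t gen_mult_mpeval by blast
qed

end
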